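(* For all integers $t\ge 2$, $\ell\ge2$ and $1\le r\le \ell$ satisfying $\ell<r(r+1)$, the braid graph $B_t=B(\ell,r,t)$ satisfies $m_{B_t}=d_{B_t}$.
   Context: For a graph $G$ with $v_G>1$ vertices and $e_G$ edges, its density is $d_G=\frac{e_G}{v_G-1}$ and its maximum density is $m_G=\max\{d_H: H\subseteq G,\ v_H>1\}$. Two sequences of vertices $(v_1,\dots,v_r)$ and $(u_1,\dots,u_r)$ form an $r$-bridge if for each $i=1,\dots,r$ the vertex $v_i$ is adjacent to all of $u_1,\dots,u_i$. For $t\ge1$, $\ell\ge2$, $1\le r\le\ell$, the braid graph $B(\ell,r,t)$ consists of $t$ vertex-disjoint $\ell$-cliques $K^{(1)}_\ell,\dots,K^{(t)}_\ell$, each with its vertices linearly ordered, where for each $i=1,\dots,t-1$ the last $r$ vertices of $K^{(i)}_\ell$ (in order, as $(v_1,\dots,v_r)$) and the first $r$ vertices of $K^{(i+1)}_\ell$ (in order, as $(u_1,\dots,u_r)$) form an $r$-bridge, and there are no other edges. Thus $d_{B_t}=\frac{t\binom{\ell}{2}+(t-1)\binom{r+1}{2}}{t\ell-1}$. *)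

theory Defs
  imports Complex_Main
begin

text \<open>Simple graphs are given by a vertex set V and an edge set E of 2-element subsets of V.\<close>

definition density :: "'a set \<Rightarrow> 'a set set \<Rightarrow> real" where
  "density V E = real (card E) / (real (card V) - 1)"

definition max_density :: "'a set \<Rightarrow> 'a set set \<Rightarrow> real" where
  "max_density V E = Max {density V' E' | V' E'.
      V' \<subseteq> V \<and> E' \<subseteq> E \<and> (\<forall>e\<in>E'. e \<subseteq> V') \<and> card V' > 1}"

text \<open>Braid graph B(l,r,t): vertex (i,j) is the j-th vertex (0-indexed) of the i-th clique (0-indexed).
  The r-bridge between clique i and i+1: v_k = (i, l-r+k-1), u_k = (i+1, k-1) for k = 1..r,
  with v_k adjacent to u_1..u_k; i.e. (i, l-r+a) ~ (i+1, b) iff b \<le> a < r.\<close>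

definition braid_V :: "nat \<Rightarrow> nat \<Rightarrow> (nat \<times> nat) set" where
  "braid_V l t = {0..<t} \<times> {0..<l}"

definition braid_E :: "nat \<Rightarrow> nat \<Rightarrow> nat \<Rightarrow> (nat \<times> nat) set set" where
  "braid_E l r t =
     {{(i, j), (i, j')} | i j j'. i < t \<and> j < l \<and> j' < l \<and> j \<noteq> j'}
   \<union> {{(i, l - r + a), (i + 1, b)} | i a b. i + 1 < t \<and> b \<le> a \<and> a < r}"

end

theory Submission
  imports Defs
begin

text \<open>Let a vertex set S of B(l, r, t) with n vertices meet the i-th clique in x_i vertices and span
  b_i edges of the i-th bridge. Then S spans \<open>\<Sum> C(x_i, 2) + \<Sum> b_i\<close> edges, where
  \<open>b_i \<le> x_i x_(i+1)\<close>, and a bridge missing k of its r vertices on one side loses at least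
  \<open>1 + \<dots> + k = C(k + 1, 2)\<close> of its \<open>C(r + 1, 2)\<close> edges. Write the density of B_t as
  \<open>d = l/2 + \<epsilon>\<close>. If every x_i is at most 1, S spans at most \<open>n - 1 \<le> d (n - 1)\<close> edges.
  Otherwise \<open>d (n - 1)\<close> minus the number of edges equals the total bridge deficit
  \<open>\<Sum> (C(r + 1, 2) - b_i)\<close> minus the clique excesses \<open>(l - x_i)(\<epsilon> - (x_i - 1)/2)\<close>.
  Leaving out a largest clique, charge every other clique to an adjacent bridge: as \<open>l \<le> r(r + 1)\<close>,
  its excess stays below the deficit of that bridge by a surplus proportional to \<open>l - x_i\<close>, and
  these surpluses cover the excess of the largest clique.\<close>

lemma real_choose_two: "real (n choose 2) = real n * (real n - 1) / 2"
  by (induction n) (auto simp: numeral_2_eq_2 field_simps)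

lemma choose_two_mono: "m \<le> n \<Longrightarrow> m choose 2 \<le> n choose 2"
  by (simp add: choose_two div_le_mono mult_le_mono)

lemma sum_lessThan_Suc_eq_choose_two: "(\<Sum>a<r. Suc a) = Suc r choose 2"
  by (induction r) (simp_all add: numeral_2_eq_2)

lemma Suc_card_choose_two_le_sum_Suc:
  fixes A :: "nat set"
  assumes "finite A"
  shows "Suc (card A) choose 2 \<le> (\<Sum>a\<in>A. Suc a)"
  using assms
proof (induction A rule: finite_linorder_max_induct)
  case empty
  then show ?case by simp
next
  case (insert b A)
  have "b \<notin> A" and "card A \<le> b"
    using card_mono[of "{..<b}" A] insert.hyps by auto
  then show ?case
    using insert by (simp add: numeral_2_eq_2)
qed

lemma sum_Suc_add_choose_two_le:
  fixes P :: "nat set"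
  assumes "P \<subseteq> {..<r}"
  shows "(\<Sum>a\<in>P. Suc a) + (Suc (r - card P) choose 2) \<le> Suc r choose 2"
proof -
  have "finite P"
    using assms finite_subset by blast
  then have "card ({..<r} - P) = r - card P"
    using assms by (simp add: card_Diff_subset)
  then have "Suc (r - card P) choose 2 \<le> (\<Sum>a\<in>{..<r} - P. Suc a)"
    using Suc_card_choose_two_le_sum_Suc[of "{..<r} - P"] by simp
  moreover have "(\<Sum>a<r. Suc a) = (\<Sum>a\<in>{..<r} - P. Suc a) + (\<Sum>a\<in>P. Suc a)"
    using assms by (simp add: sum.subset_diff)
  ultimately show ?thesis
    by (simp add: sum_lessThan_Suc_eq_choose_two)
qed

lemma sum_remove_eq_sum_skip:
  assumes "j < t"
  shows "(\<Sum>i\<in>{..<t} - {j}. f i) = (\<Sum>i<t - 1. f (if i < j then i else Suc i))"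
  using assms
  by (intro sum.reindex_bij_witness[of _ "\<lambda>i. if i < j then i else Suc i" "\<lambda>i. if i < j then i else i - 1"])
    auto

lemma clique_excess_le_bridge_deficit:
  fixes l r x :: nat
  assumes "x \<le> l" and "r \<le> l"
  shows "(real l - real x) * (real r * (real r + 1) - real l * real x)
    \<le> 2 * real l * real (Suc (r - x) choose 2)"
proof (cases "x \<le> r")
  case True
  have "0 \<le> (real l - real r) * (real l - real r - 1)"
    using assms(2) by (cases "l = r") (auto intro!: mult_nonneg_nonneg)
  moreover have "2 * real l * real (Suc (r - x) choose 2)
      - (real l - real x) * (real r * (real r + 1) - real l * real x)
      = real x * ((real l - real r) * (real l - real r - 1))"
    using True by (simp add: real_choose_two field_simps)
  ultimately show ?thesis
    by (metis diff_ge_0_iff_ge mult_nonneg_nonneg of_nat_0_le_iff)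
next
  case False
  have "real r * (real r + 1) \<le> real l * real x"
  proof -
    have "r * (r + 1) \<le> l * x"
      using False assms(2) by (intro mult_mono) auto
    then show ?thesis
      by (metis of_nat_1 of_nat_add of_nat_le_iff of_nat_mult)
  qed
  then show ?thesis
    using False assms(1) by (simp add: mult_nonneg_nonpos numeral_2_eq_2)
qed

lemma sum_adjacent_products_less_sum_01:
  fixes x b :: "nat \<Rightarrow> nat"
  assumes "\<And>i. i < t \<Longrightarrow> x i \<le> 1" and "1 \<le> (\<Sum>i<t. x i)"
    and "\<And>i. Suc i < t \<Longrightarrow> b i \<le> x i * x (Suc i)"
  shows "(\<Sum>i<t - 1. b i) + 1 \<le> (\<Sum>i<t. x i)"
proof -
  obtain k where k: "k < t" "x k = 1"
  proof -
    obtain k where "k < t" "x k \<noteq> 0"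
      using assms(2) by (metis lessThan_iff not_one_le_zero sum.neutral)
    then show ?thesis using assms(1) that by (metis le_neq_implies_less less_one)
  qed
  have "b i \<le> x (if i < k then i else Suc i)" if "i < t - 1" for i
  proof -
    have "x i \<le> 1" "x (Suc i) \<le> 1" "b i \<le> x i * x (Suc i)"
      using that assms(1,3) by auto
    then show ?thesis
      by (cases "x i"; cases "x (Suc i)") auto
  qed
  then have "(\<Sum>i<t - 1. b i) \<le> (\<Sum>i<t - 1. x (if i < k then i else Suc i))"
    by (intro sum_mono) simp
  also have "\<dots> = (\<Sum>i\<in>{..<t} - {k}. x i)"
    using k(1) by (rule sum_remove_eq_sum_skip[symmetric])
  also have "\<dots> + 1 = (\<Sum>i<t. x i)"
    using k by (simp add: sum.remove[of "{..<t}" k])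
  finally show ?thesis by simp
qed

text \<open>Clique j is a largest one; every other clique i is charged to the bridge
  \<open>if i < j then i else i - 1\<close> and leaves a surplus \<open>(l - x_i) \<kappa>\<close>.\<close>

lemma sum_clique_excess_le:
  fixes x b :: "nat \<Rightarrow> nat" and t j l r :: nat and \<epsilon> :: real
  defines "B \<equiv> real (Suc r choose 2)"
  defines "\<kappa> \<equiv> (B - real l / 2) / real l - \<epsilon>"
  assumes "j < t" and "\<And>i. i < t \<Longrightarrow> x i \<le> x j" and "2 \<le> x j" and "x j \<le> l" and "r \<le> l"
    and "\<And>i. Suc i < t \<Longrightarrow> b i + (Suc (r - x i) choose 2) \<le> Suc r choose 2"
    and "\<And>i. Suc i < t \<Longrightarrow> b i + (Suc (r - x (Suc i)) choose 2) \<le> Suc r choose 2"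
    and "0 \<le> \<kappa>" and "\<epsilon> - 1 / 2 \<le> (real t - 1) * \<kappa>"
  shows "(\<Sum>i<t. (real l - real (x i)) * (\<epsilon> - (real (x i) - 1) / 2)) \<le> (\<Sum>i<t - 1. B - real (b i))"
proof -
  define D where "D i = (real l - real (x i)) * (\<epsilon> - (real (x i) - 1) / 2)" for i
  define g where "g i = real (Suc (r - x i) choose 2)" for i
  have "0 < l"
    using assms(5,6) by linarith
  have D_le: "D i \<le> g i - (real l - real (x i)) * \<kappa>" if "i < t" for i
  proof -
    have "(real l - real (x i)) * (real r * (real r + 1) - real l * real (x i)) \<le> 2 * real l * g i"
      unfolding g_def using that assms(4,6,7) by (intro clique_excess_le_bridge_deficit) (auto intro: order_trans)
    moreover have "D i + (real l - real (x i)) * \<kappa>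
        = (real l - real (x i)) * (real r * (real r + 1) - real l * real (x i)) / (2 * real l)"
      unfolding D_def \<kappa>_def B_def using \<open>0 < l\<close> by (simp add: real_choose_two field_simps)
    ultimately have "D i + (real l - real (x i)) * \<kappa> \<le> g i"
      using \<open>0 < l\<close> by (simp add: pos_divide_le_eq mult.commute)
    then show ?thesis
      by linarith
  qed
  have D_top: "D j \<le> (real l - real (x j)) * (\<epsilon> - 1 / 2)"
    unfolding D_def using assms(5,6) by (intro mult_left_mono) auto
  have "(\<Sum>i\<in>{..<t} - {j}. (real l - real (x j)) * \<kappa>) \<le> (\<Sum>i\<in>{..<t} - {j}. (real l - real (x i)) * \<kappa>)"
    using assms(4,10) by (intro sum_mono mult_right_mono) auto
  then have "(\<Sum>i\<in>{..<t} - {j}. D i) \<le> (\<Sum>i\<in>{..<t} - {j}. g i) - (real t - 1) * (real l - real (x j)) * \<kappa>"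
    using sum_mono[of "{..<t} - {j}" D "\<lambda>i. g i - (real l - real (x i)) * \<kappa>"] D_le assms(3)
    by (simp add: sum_subtractf of_nat_diff)
  moreover have "(\<Sum>i\<in>{..<t} - {j}. g i) \<le> (\<Sum>i<t - 1. B - real (b i))"
  proof -
    have "g (if i < j then i else Suc i) \<le> B - real (b i)" if "i < t - 1" for i
    proof -
      have "b i + (Suc (r - x (if i < j then i else Suc i)) choose 2) \<le> Suc r choose 2"
        using that assms(8,9)[of i] by simp
      then show ?thesis
        unfolding g_def B_def by linarith
    qed
    then show ?thesis
      unfolding sum_remove_eq_sum_skip[OF assms(3)] by (intro sum_mono) simp
  qed
  moreover have "(real l - real (x j)) * (\<epsilon> - 1 / 2) \<le> (real t - 1) * (real l - real (x j)) * \<kappa>"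
    using mult_left_mono[OF assms(11), of "real l - real (x j)"] assms(6) by (simp add: ac_simps)
  moreover have "(\<Sum>i<t. D i) = D j + (\<Sum>i\<in>{..<t} - {j}. D i)"
    using assms(3) by (simp add: sum.remove)
  ultimately have "(\<Sum>i<t. D i) \<le> (\<Sum>i<t - 1. B - real (b i))"
    using D_top by linarith
  then show ?thesis
    unfolding D_def .
qed

definition braid_density :: "nat \<Rightarrow> nat \<Rightarrow> nat \<Rightarrow> real" where
  "braid_density l r t = real (t * (l choose 2) + (t - 1) * (Suc r choose 2)) / (real t * real l - 1)"

lemma braid_density_excess:
  fixes t l r :: nat
  defines "B \<equiv> real (Suc r choose 2)"
  defines "\<epsilon> \<equiv> braid_density l r t - real l / 2"
  assumes "1 \<le> t" and "2 \<le> l" and "r \<le> l" and "l \<le> r * (r + 1)"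
  shows "\<epsilon> * (real t * real l - 1) = (real t - 1) * (B - real l / 2)"
    and "0 \<le> \<epsilon>"
    and "0 \<le> (B - real l / 2) / real l - \<epsilon>"
    and "\<epsilon> - 1 / 2 \<le> (real t - 1) * ((B - real l / 2) / real l - \<epsilon>)"
proof -
  have TL: "0 < real t * real l - 1"
  proof -
    have "1 * 2 \<le> real t * real l"
      using assms(3,4) by (intro mult_mono) auto
    then show ?thesis by simp
  qed
  show \<epsilon>_eq: "\<epsilon> * (real t * real l - 1) = (real t - 1) * (B - real l / 2)"
    using TL assms(3) unfolding \<epsilon>_def braid_density_def B_def
    by (simp add: real_choose_two of_nat_diff field_simps)
  have "real l \<le> real r * (real r + 1)"
    using assms(6) by (metis of_nat_1 of_nat_add of_nat_le_iff of_nat_mult)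
  then have B_ge: "real l / 2 \<le> B"
    unfolding B_def by (simp add: real_choose_two algebra_simps)
  have \<epsilon>_def': "\<epsilon> = (real t - 1) * (B - real l / 2) / (real t * real l - 1)"
    using \<epsilon>_eq TL by (simp add: field_simps)
  then show "0 \<le> \<epsilon>"
    using TL B_ge assms(3) by simp
  define \<kappa> where "\<kappa> = (B - real l / 2) / real l - \<epsilon>"
  have "\<kappa> = (B - real l / 2) * (real l - 1) / (real l * (real t * real l - 1))"
    unfolding \<kappa>_def \<epsilon>_def' using TL assms(4) by (simp add: field_simps)
  then show "0 \<le> (B - real l / 2) / real l - \<epsilon>"
    unfolding \<kappa>_def[symmetric] using TL B_ge assms(4) by simp
  have "real r * (real r + 1) \<le> real l * (real l + 1)"
    using assms(5) by (intro mult_mono) auto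
  then have "B \<le> real l * real l / 2 + real l / 2"
    unfolding B_def by (simp add: real_choose_two field_simps)
  then have "(B - real l / 2) / real l \<le> real l / 2"
    using assms(4) by (simp add: pos_divide_le_eq algebra_simps)
  then have "\<epsilon> \<le> real l / 2"
    using \<open>0 \<le> (B - real l / 2) / real l - \<epsilon>\<close> by linarith
  then have "\<epsilon> / real l \<le> 1 / 2"
    using assms(4) by (simp add: pos_divide_le_eq)
  moreover have "(real t - 1) * \<kappa> = \<epsilon> - \<epsilon> / real l"
  proof -
    have "(real t - 1) * \<kappa> = (real t - 1) * (B - real l / 2) / real l - (real t - 1) * \<epsilon>"
      unfolding \<kappa>_def by (simp add: algebra_simps)
    also have "\<dots> = \<epsilon> * (real t * real l - 1) / real l - (real t - 1) * \<epsilon>"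
      using \<epsilon>_eq by simp
    also have "\<dots> = \<epsilon> - \<epsilon> / real l"
      using assms(4) by (simp add: field_simps)
    finally show ?thesis .
  qed
  ultimately show "\<epsilon> - 1 / 2 \<le> (real t - 1) * ((B - real l / 2) / real l - \<epsilon>)"
    unfolding \<kappa>_def by linarith
qed

lemma edge_count_slack_eq:
  fixes x b :: "nat \<Rightarrow> nat" and t l :: nat and B \<epsilon> :: real
  assumes "1 \<le> t" and "\<epsilon> * (real t * real l - 1) = (real t - 1) * (B - real l / 2)"
  shows "(real l / 2 + \<epsilon>) * (real (\<Sum>i<t. x i) - 1) - real ((\<Sum>i<t. x i choose 2) + (\<Sum>i<t - 1. b i))
    = (\<Sum>i<t - 1. B - real (b i)) - (\<Sum>i<t. (real l - real (x i)) * (\<epsilon> - (real (x i) - 1) / 2))"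
proof -
  have "(\<Sum>i<t. (real l - real (x i)) * (\<epsilon> - (real (x i) - 1) / 2))
      = (\<Sum>i<t. (real l * \<epsilon> + real l / 2) - (real l / 2 + \<epsilon>) * real (x i) + real (x i choose 2))"
    by (intro sum.cong refl) (simp add: real_choose_two field_simps)
  also have "\<dots> = real t * (real l * \<epsilon> + real l / 2) - (real l / 2 + \<epsilon>) * real (\<Sum>i<t. x i)
      + (\<Sum>i<t. real (x i choose 2))"
    by (simp add: sum.distrib sum_subtractf sum_distrib_left)
  finally have "(\<Sum>i<t. (real l - real (x i)) * (\<epsilon> - (real (x i) - 1) / 2))
      = real t * (real l * \<epsilon> + real l / 2) - (real l / 2 + \<epsilon>) * real (\<Sum>i<t. x i)
        + (\<Sum>i<t. real (x i choose 2))" .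
  moreover have "(\<Sum>i<t - 1. B - real (b i)) = (real t - 1) * B - (\<Sum>i<t - 1. real (b i))"
    using assms(1) by (simp add: sum_subtractf of_nat_diff)
  moreover have "(real t - 1) * B - real t * (real l * \<epsilon> + real l / 2) = - (real l / 2 + \<epsilon>)"
    using assms(2) by (simp add: field_simps)
  moreover have "(real l / 2 + \<epsilon>) * (real (\<Sum>i<t. x i) - 1)
      = (real l / 2 + \<epsilon>) * real (\<Sum>i<t. x i) - (real l / 2 + \<epsilon>)"
    by (simp add: right_diff_distrib)
  ultimately show ?thesis
    by simp
qed

lemma clique_profile_le_braid_density:
  fixes x b :: "nat \<Rightarrow> nat" and t l r :: nat
  assumes "1 \<le> t" and "2 \<le> l" and "r \<le> l" and "l \<le> r * (r + 1)"
    and "\<And>i. i < t \<Longrightarrow> x i \<le> l" and "1 \<le> (\<Sum>i<t. x i)"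
    and "\<And>i. Suc i < t \<Longrightarrow> b i + (Suc (r - x i) choose 2) \<le> Suc r choose 2"
    and "\<And>i. Suc i < t \<Longrightarrow> b i + (Suc (r - x (Suc i)) choose 2) \<le> Suc r choose 2"
    and "\<And>i. Suc i < t \<Longrightarrow> b i \<le> x i * x (Suc i)"
  shows "real ((\<Sum>i<t. x i choose 2) + (\<Sum>i<t - 1. b i))
    \<le> braid_density l r t * (real (\<Sum>i<t. x i) - 1)"
proof (cases "\<forall>i<t. x i \<le> 1")
  case True
  then have "(\<Sum>i<t. x i choose 2) = 0"
    by (simp add: choose_two)
  moreover have "(\<Sum>i<t - 1. b i) + 1 \<le> (\<Sum>i<t. x i)"
    using True assms(6,9) by (intro sum_adjacent_products_less_sum_01) auto
  ultimately have "real ((\<Sum>i<t. x i choose 2) + (\<Sum>i<t - 1. b i)) + 1 \<le> real (\<Sum>i<t. x i)"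
    by (metis add_0 of_nat_1 of_nat_add of_nat_le_iff)
  then have "real ((\<Sum>i<t. x i choose 2) + (\<Sum>i<t - 1. b i)) \<le> real (\<Sum>i<t. x i) - 1"
    by linarith
  also have "\<dots> \<le> braid_density l r t * (real (\<Sum>i<t. x i) - 1)"
  proof -
    have "1 \<le> braid_density l r t"
      using braid_density_excess(2)[OF assms(1-4)] assms(2) by simp
    moreover have "0 \<le> real (\<Sum>i<t. x i) - 1"
      using of_nat_mono[OF assms(6), where 'a = real] by simp
    ultimately show ?thesis
      using mult_right_mono[of 1 "braid_density l r t" "real (\<Sum>i<t. x i) - 1"] by simp
  qed
  finally show ?thesis .
next
  case False
  then obtain i0 where "i0 < t" "2 \<le> x i0"
    by force
  then have "x ` {..<t} \<noteq> {}"
    by auto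
  then obtain j where j: "j < t" "x j = Max (x ` {..<t})"
    using Max_in[of "x ` {..<t}"] by (metis finite_imageI finite_lessThan imageE lessThan_iff)
  have j_max: "x i \<le> x j" if "i < t" for i
    using that unfolding j(2) by simp
  have "2 \<le> x j"
    using j_max \<open>i0 < t\<close> \<open>2 \<le> x i0\<close> order_trans by blast
  define \<epsilon> where "\<epsilon> = braid_density l r t - real l / 2"
  note excess = braid_density_excess[OF assms(1-4), folded \<epsilon>_def]
  have "(\<Sum>i<t. (real l - real (x i)) * (\<epsilon> - (real (x i) - 1) / 2))
      \<le> (\<Sum>i<t - 1. real (Suc r choose 2) - real (b i))"
    using j(1) j_max \<open>2 \<le> x j\<close> assms(3,5,7,8) excess(3,4) by (intro sum_clique_excess_le) auto
  then show ?thesis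
    using edge_count_slack_eq[OF assms(1) excess(1), of x b] unfolding \<epsilon>_def by simp
qed

lemma max_density_eqI:
  fixes V :: "'a set" and E :: "'a set set"
  assumes "finite V" and "\<forall>e\<in>E. e \<subseteq> V" and "1 < card V"
    and "\<And>S. S \<subseteq> V \<Longrightarrow> 1 < card S \<Longrightarrow> real (card {e \<in> E. e \<subseteq> S}) \<le> density V E * (real (card S) - 1)"
  shows "max_density V E = density V E"
proof -
  define D where "D = {density V' E' | V' E'. V' \<subseteq> V \<and> E' \<subseteq> E \<and> (\<forall>e\<in>E'. e \<subseteq> V') \<and> card V' > 1}"
  have "finite E"
    using assms(1,2) by (meson Pow_iff finite_Pow_iff finite_subset subsetI)
  have "D \<subseteq> (\<lambda>(V', E'). density V' E') ` (Pow V \<times> Pow E)"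
    unfolding D_def by auto
  then have "finite D"
    by (rule finite_subset) (simp add: assms(1) \<open>finite E\<close>)
  moreover have "density V E \<in> D"
    unfolding D_def using assms(2,3) by blast
  moreover have "y \<le> density V E" if "y \<in> D" for y
  proof -
    obtain V' E' where y: "y = density V' E'" "V' \<subseteq> V" "E' \<subseteq> E" "\<forall>e\<in>E'. e \<subseteq> V'" "1 < card V'"
      using \<open>y \<in> D\<close> unfolding D_def by blast
    then have "card E' \<le> card {e \<in> E. e \<subseteq> V'}"
      using \<open>finite E\<close> by (intro card_mono) auto
    then have "real (card E') \<le> density V E * (real (card V') - 1)"
      using assms(4)[OF y(2,5)] by linarith
    then show ?thesis
      using y(1,5) by (simp add: density_def divide_le_eq)
  qed
  ultimately have "Max D = density V E"
    by (intro Max_eqI)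
  then show ?thesis
    unfolding max_density_def D_def .
qed

definition braid_row :: "(nat \<times> nat) set \<Rightarrow> nat \<Rightarrow> nat \<Rightarrow> nat set" where
  "braid_row S l i = {j. j < l \<and> (i, j) \<in> S}"

definition bridge_left :: "(nat \<times> nat) set \<Rightarrow> nat \<Rightarrow> nat \<Rightarrow> nat \<Rightarrow> nat set" where
  "bridge_left S l r i = {a. a < r \<and> (i, l - r + a) \<in> S}"

definition bridge_right :: "(nat \<times> nat) set \<Rightarrow> nat \<Rightarrow> nat \<Rightarrow> nat set" where
  "bridge_right S r i = {b. b < r \<and> (Suc i, b) \<in> S}"

text \<open>A pair (a, b) stands for the bridge edge between (i, l - r + a) and (i + 1, b), that is
  between v_(a+1) and u_(b+1).\<close>

definition braid_bridge :: "(nat \<times> nat) set \<Rightarrow> nat \<Rightarrow> nat \<Rightarrow> nat \<Rightarrow> (nat \<times> nat) set" where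
  "braid_bridge S l r i = {(a, b) \<in> bridge_left S l r i \<times> bridge_right S r i. b \<le> a}"

lemma finite_braid_row [simp]: "finite (braid_row S l i)"
  unfolding braid_row_def by simp

lemma finite_bridge_left [simp]: "finite (bridge_left S l r i)"
  unfolding bridge_left_def by simp

lemma finite_bridge_right [simp]: "finite (bridge_right S r i)"
  unfolding bridge_right_def by simp

lemma finite_braid_bridge [simp]: "finite (braid_bridge S l r i)"
  unfolding braid_bridge_def by (rule finite_subset[of _ "bridge_left S l r i \<times> bridge_right S r i"]) auto

lemma card_bridge_left_le:
  assumes "r \<le> l"
  shows "card (bridge_left S l r i) \<le> card (braid_row S l i)"
proof (rule card_inj_on_le)
  show "inj_on (\<lambda>a. l - r + a) (bridge_left S l r i)"
    by (simp add: inj_on_def)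
  show "(\<lambda>a. l - r + a) ` bridge_left S l r i \<subseteq> braid_row S l i"
    using assms unfolding bridge_left_def braid_row_def by auto
qed simp

lemma card_bridge_right_le:
  assumes "r \<le> l"
  shows "card (bridge_right S r i) \<le> card (braid_row S l (Suc i))"
  using assms by (intro card_mono) (auto simp: bridge_right_def braid_row_def)

lemma card_braid_bridge_le_mult:
  assumes "r \<le> l"
  shows "card (braid_bridge S l r i) \<le> card (braid_row S l i) * card (braid_row S l (Suc i))"
proof -
  have "card (braid_bridge S l r i) \<le> card (bridge_left S l r i \<times> bridge_right S r i)"
    by (rule card_mono) (auto simp: braid_bridge_def bridge_left_def bridge_right_def)
  also have "\<dots> \<le> card (braid_row S l i) * card (braid_row S l (Suc i))"
    using assms by (simp add: card_cartesian_product mult_le_mono card_bridge_left_le card_bridge_right_le)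
  finally show ?thesis .
qed

lemma card_braid_bridge_le_left:
  assumes "r \<le> l"
  shows "card (braid_bridge S l r i) + (Suc (r - card (braid_row S l i)) choose 2) \<le> Suc r choose 2"
proof -
  define P where "P = bridge_left S l r i"
  have "P \<subseteq> {..<r}"
    unfolding P_def bridge_left_def by auto
  have "card (braid_bridge S l r i) \<le> card (Sigma P (\<lambda>a. {..a}))"
    by (rule card_mono) (auto simp: braid_bridge_def P_def)
  also have "\<dots> = (\<Sum>a\<in>P. Suc a)"
    by (simp add: P_def)
  finally have "card (braid_bridge S l r i) \<le> (\<Sum>a\<in>P. Suc a)" .
  moreover have "Suc (r - card (braid_row S l i)) choose 2 \<le> Suc (r - card P) choose 2"
    unfolding P_def using assms by (intro choose_two_mono) (simp add: card_bridge_left_le diff_le_mono2)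
  ultimately show ?thesis
    using sum_Suc_add_choose_two_le[OF \<open>P \<subseteq> {..<r}\<close>] by linarith
qed

lemma card_braid_bridge_le_right:
  assumes "r \<le> l"
  shows "card (braid_bridge S l r i) + (Suc (r - card (braid_row S l (Suc i))) choose 2) \<le> Suc r choose 2"
proof -
  \<comment> \<open>the reflection b \<mapsto> r - 1 - b reduces this to the count for the left side\<close>
  define Q where "Q = (\<lambda>b. r - 1 - b) ` bridge_right S r i"
  have "Q \<subseteq> {..<r}" and "finite Q"
    unfolding Q_def bridge_right_def by auto
  have "card Q = card (bridge_right S r i)"
    unfolding Q_def by (rule card_image) (auto simp: inj_on_def bridge_right_def)
  have "card (braid_bridge S l r i) \<le> card (Sigma Q (\<lambda>a. {..a}))"
  proof (rule card_inj_on_le)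
    show "inj_on (\<lambda>(a, b). (r - 1 - b, r - 1 - a)) (braid_bridge S l r i)"
      by (auto simp: inj_on_def braid_bridge_def bridge_left_def bridge_right_def)
    show "(\<lambda>(a, b). (r - 1 - b, r - 1 - a)) ` braid_bridge S l r i \<subseteq> Sigma Q (\<lambda>a. {..a})"
      by (auto simp: Q_def braid_bridge_def bridge_left_def)
  qed (simp add: \<open>finite Q\<close>)
  also have "\<dots> = (\<Sum>a\<in>Q. Suc a)"
    by (simp add: \<open>finite Q\<close>)
  finally have "card (braid_bridge S l r i) \<le> (\<Sum>a\<in>Q. Suc a)" .
  moreover have "Suc (r - card (braid_row S l (Suc i))) choose 2 \<le> Suc (r - card Q) choose 2"
    unfolding \<open>card Q = card (bridge_right S r i)\<close> using assms
    by (intro choose_two_mono) (simp add: card_bridge_right_le diff_le_mono2)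
  ultimately show ?thesis
    using sum_Suc_add_choose_two_le[OF \<open>Q \<subseteq> {..<r}\<close>] by linarith
qed

definition braid_clique_edges :: "(nat \<times> nat) set \<Rightarrow> nat \<Rightarrow> nat \<Rightarrow> (nat \<times> nat) set set" where
  "braid_clique_edges S l i = {e. e \<subseteq> Pair i ` braid_row S l i \<and> card e = 2}"

definition braid_bridge_edges :: "(nat \<times> nat) set \<Rightarrow> nat \<Rightarrow> nat \<Rightarrow> nat \<Rightarrow> (nat \<times> nat) set set" where
  "braid_bridge_edges S l r i = (\<lambda>(a, b). {(i, l - r + a), (Suc i, b)}) ` braid_bridge S l r i"

lemma induced_braid_edges_eq:
  "{e \<in> braid_E l r t. e \<subseteq> S}
    = (\<Union>i<t. braid_clique_edges S l i) \<union> (\<Union>i<t - 1. braid_bridge_edges S l r i)"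
proof (intro equalityI subsetI)
  fix e assume "e \<in> {e \<in> braid_E l r t. e \<subseteq> S}"
  then have "e \<in> braid_E l r t" and "e \<subseteq> S"
    by auto
  from this(1) show "e \<in> (\<Union>i<t. braid_clique_edges S l i) \<union> (\<Union>i<t - 1. braid_bridge_edges S l r i)"
    unfolding braid_E_def
  proof (elim UnE CollectE exE conjE)
    fix i j j' assume e: "e = {(i, j), (i, j')}" "i < t" "j < l" "j' < l" "j \<noteq> j'"
    then have "e \<in> braid_clique_edges S l i"
      using \<open>e \<subseteq> S\<close> by (auto simp: braid_clique_edges_def braid_row_def)
    then show ?thesis
      using e(2) by blast
  next
    fix i a b assume e: "e = {(i, l - r + a), (i + 1, b)}" "i + 1 < t" "b \<le> a" "a < r"
    then have "(a, b) \<in> braid_bridge S l r i"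
      using \<open>e \<subseteq> S\<close> by (auto simp: braid_bridge_def bridge_left_def bridge_right_def)
    then have "e \<in> braid_bridge_edges S l r i"
      unfolding braid_bridge_edges_def using e(1) by force
    then show ?thesis
      using e(2) by auto
  qed
next
  fix e assume "e \<in> (\<Union>i<t. braid_clique_edges S l i) \<union> (\<Union>i<t - 1. braid_bridge_edges S l r i)"
  then show "e \<in> {e \<in> braid_E l r t. e \<subseteq> S}"
  proof (elim UnE UN_E)
    fix i assume "i \<in> {..<t}" and e: "e \<in> braid_clique_edges S l i"
    then obtain p q where "e = {p, q}" "p \<noteq> q"
      unfolding braid_clique_edges_def by (auto simp: card_2_iff)
    moreover have "p \<in> Pair i ` braid_row S l i" "q \<in> Pair i ` braid_row S l i"
      using e \<open>e = {p, q}\<close> unfolding braid_clique_edges_def by auto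
    ultimately obtain j j' where "e = {(i, j), (i, j')}" "j \<noteq> j'" "j \<in> braid_row S l i" "j' \<in> braid_row S l i"
      by blast
    then show ?thesis
      using \<open>i \<in> {..<t}\<close> unfolding braid_E_def braid_row_def by blast
  next
    fix i assume "i \<in> {..<t - 1}" and "e \<in> braid_bridge_edges S l r i"
    then obtain a b where e: "e = {(i, l - r + a), (i + 1, b)}" "(a, b) \<in> braid_bridge S l r i"
      unfolding braid_bridge_edges_def by auto
    then have "b \<le> a" "a < r" "e \<subseteq> S"
      unfolding braid_bridge_def bridge_left_def bridge_right_def by auto
    moreover have "i + 1 < t"
      using \<open>i \<in> {..<t - 1}\<close> by simp
    ultimately show ?thesis
      using e(1) unfolding braid_E_def by blast
  qed
qed

lemma card_braid_clique_edges: "card (braid_clique_edges S l i) = card (braid_row S l i) choose 2"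
proof -
  have "card (Pair i ` braid_row S l i) = card (braid_row S l i)"
    by (rule card_image) (simp add: inj_on_def)
  then show ?thesis
    unfolding braid_clique_edges_def using n_subsets[of "Pair i ` braid_row S l i" 2] by simp
qed

lemma card_braid_bridge_edges: "card (braid_bridge_edges S l r i) = card (braid_bridge S l r i)"
  unfolding braid_bridge_edges_def
proof (rule card_image, rule inj_onI, clarify)
  fix a b a' b'
  assume "{(i, l - r + a), (Suc i, b)} = {(i, l - r + a'), (Suc i, b')}"
    and "(a, b) \<in> braid_bridge S l r i" "(a', b') \<in> braid_bridge S l r i"
  then show "a = a' \<and> b = b'"
    by (auto simp: doubleton_eq_iff)
qed

lemma finite_braid_clique_edges [simp]: "finite (braid_clique_edges S l i)"
  unfolding braid_clique_edges_def
  by (rule finite_subset[of _ "Pow (Pair i ` braid_row S l i)"]) auto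

lemma finite_braid_bridge_edges [simp]: "finite (braid_bridge_edges S l r i)"
  unfolding braid_bridge_edges_def by simp

lemma card_induced_braid_edges:
  "card {e \<in> braid_E l r t. e \<subseteq> S}
    = (\<Sum>i<t. card (braid_row S l i) choose 2) + (\<Sum>i<t - 1. card (braid_bridge S l r i))"
proof -
  have clique_disjoint: "braid_clique_edges S l i \<inter> braid_clique_edges S l j = {}" if "i \<noteq> j" for i j
    using that unfolding braid_clique_edges_def by (fastforce simp: card_2_iff)
  have bridge_disjoint: "braid_bridge_edges S l r i \<inter> braid_bridge_edges S l r j = {}" if "i \<noteq> j" for i j
    using that unfolding braid_bridge_edges_def by (auto simp: doubleton_eq_iff)
  have "e \<notin> braid_clique_edges S l i" if e: "e \<in> braid_bridge_edges S l r j" for e i j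
  proof -
    obtain a b where "e = {(j, l - r + a), (Suc j, b)}"
      using e unfolding braid_bridge_edges_def by auto
    then show ?thesis
      unfolding braid_clique_edges_def by auto
  qed
  then have "(\<Union>i<t. braid_clique_edges S l i) \<inter> (\<Union>i<t - 1. braid_bridge_edges S l r i) = {}"
    by blast
  then have "card {e \<in> braid_E l r t. e \<subseteq> S}
      = card (\<Union>i<t. braid_clique_edges S l i) + card (\<Union>i<t - 1. braid_bridge_edges S l r i)"
    unfolding induced_braid_edges_eq by (intro card_Un_disjoint) auto
  also have "card (\<Union>i<t. braid_clique_edges S l i) = (\<Sum>i<t. card (braid_clique_edges S l i))"
    using clique_disjoint by (intro card_UN_disjoint) auto
  also have "card (\<Union>i<t - 1. braid_bridge_edges S l r i) = (\<Sum>i<t - 1. card (braid_bridge_edges S l r i))"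
    using bridge_disjoint by (intro card_UN_disjoint) auto
  finally show ?thesis
    by (simp add: card_braid_clique_edges card_braid_bridge_edges)
qed

lemma card_braid_subset:
  assumes "S \<subseteq> braid_V l t"
  shows "card S = (\<Sum>i<t. card (braid_row S l i))"
proof -
  have "S = (\<Union>i<t. Pair i ` braid_row S l i)"
  proof (intro equalityI subsetI)
    fix v assume "v \<in> S"
    moreover obtain i j where "v = (i, j)"
      by fastforce
    ultimately have "i < t" "v \<in> Pair i ` braid_row S l i"
      using assms unfolding braid_V_def braid_row_def by auto
    then show "v \<in> (\<Union>i<t. Pair i ` braid_row S l i)"
      by blast
  qed (auto simp: braid_row_def)
  also have "card \<dots> = (\<Sum>i<t. card (Pair i ` braid_row S l i))"
    by (intro card_UN_disjoint) auto
  also have "\<dots> = (\<Sum>i<t. card (braid_row S l i))"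
    by (intro sum.cong refl card_image) (simp add: inj_on_def)
  finally show ?thesis .
qed

lemma braid_E_subset_braid_V:
  assumes "r \<le> l" and "e \<in> braid_E l r t"
  shows "e \<subseteq> braid_V l t"
  using assms unfolding braid_E_def braid_V_def by auto

lemma card_braid_bridge_braid_V:
  assumes "r \<le> l" and "Suc i < t"
  shows "card (braid_bridge (braid_V l t) l r i) = Suc r choose 2"
proof -
  have "braid_bridge (braid_V l t) l r i = Sigma {..<r} (\<lambda>a. {..a})"
    using assms unfolding braid_bridge_def bridge_left_def bridge_right_def braid_V_def by auto
  then show ?thesis
    by (simp add: sum_lessThan_Suc_eq_choose_two)
qed

lemma density_braid:
  assumes "r \<le> l"
  shows "density (braid_V l t) (braid_E l r t) = braid_density l r t"
proof -
  have "braid_E l r t = {e \<in> braid_E l r t. e \<subseteq> braid_V l t}"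
    using braid_E_subset_braid_V[OF assms(1)] by blast
  also have "card \<dots> = (\<Sum>i<t. card (braid_row (braid_V l t) l i) choose 2)
      + (\<Sum>i<t - 1. card (braid_bridge (braid_V l t) l r i))"
    by (rule card_induced_braid_edges)
  also have "\<dots> = t * (l choose 2) + (t - 1) * (Suc r choose 2)"
  proof -
    have "braid_row (braid_V l t) l i = {..<l}" if "i < t" for i
      using that unfolding braid_row_def braid_V_def by auto
    then show ?thesis
      using card_braid_bridge_braid_V[OF assms(1)] by simp
  qed
  finally show ?thesis
    unfolding density_def braid_density_def braid_V_def by (simp add: card_cartesian_product)
qed

lemma induced_braid_edges_le_braid_density:
  assumes "1 \<le> t" and "2 \<le> l" and "r \<le> l" and "l \<le> r * (r + 1)"
    and "S \<subseteq> braid_V l t" and "1 < card S"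
  shows "real (card {e \<in> braid_E l r t. e \<subseteq> S}) \<le> braid_density l r t * (real (card S) - 1)"
proof -
  have "card (braid_row S l i) \<le> l" for i
    using card_mono[of "{..<l}" "braid_row S l i"] unfolding braid_row_def by auto
  then have "real ((\<Sum>i<t. card (braid_row S l i) choose 2) + (\<Sum>i<t - 1. card (braid_bridge S l r i)))
      \<le> braid_density l r t * (real (\<Sum>i<t. card (braid_row S l i)) - 1)"
    using assms(6) card_braid_bridge_le_left[OF assms(3)] card_braid_bridge_le_right[OF assms(3)]
      card_braid_bridge_le_mult[OF assms(3)]
    unfolding card_braid_subset[OF assms(5)]
    by (intro clique_profile_le_braid_density assms(1-4)) auto
  then show ?thesis
    unfolding card_induced_braid_edges card_braid_subset[OF assms(5)] .
qed

theorem proposition4p3: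
  fixes l r t :: nat
  assumes "t \<ge> 2" and "l \<ge> 2" and "1 \<le> r" and "r \<le> l" and "l < r * (r + 1)"
  shows "max_density (braid_V l t) (braid_E l r t) = density (braid_V l t) (braid_E l r t)"
proof (rule max_density_eqI)
  show "finite (braid_V l t)"
    unfolding braid_V_def by simp
  show "\<forall>e\<in>braid_E l r t. e \<subseteq> braid_V l t"
    using braid_E_subset_braid_V[OF assms(4)] by blast
  have "2 * 2 \<le> t * l"
    using assms(1,2) by (intro mult_mono) auto
  then show "1 < card (braid_V l t)"
    unfolding braid_V_def by (simp add: card_cartesian_product)
  fix S assume "S \<subseteq> braid_V l t" and "1 < card S"
  then show "real (card {e \<in> braid_E l r t. e \<subseteq> S})
      \<le> density (braid_V l t) (braid_E l r t) * (real (card S) - 1)"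
    unfolding density_braid[OF assms(4)] using assms
    by (intro induced_braid_edges_le_braid_density) auto
qed

end
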